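(* Consider the Rayleigh fading channel $y=hx+v$, $v\sim\mathcal{CN}(0,1)$, perfect CSI at transmitter and receiver, $|h|^2$ exponential with unit mean. Let $\mathcal{A}(\mathrm{SNR})\ge1$ be a PAPR depending on $\mathrm{SNR}$, and let $\lambda_0=\lambda_0(\mathrm{SNR})$ be the water-filling level defined by $\mathrm{SNR}=\mathbf{E}[[1/\lambda_0-1/|h|^2]^+]$. Suppose the peak constraint is effective, i.e. $\mathcal{A}(\mathrm{SNR})\,\mathrm{SNR}<1/\lambda_0$ for all small $\mathrm{SNR}$. Let $\lambda=\lambda(\mathrm{SNR})$, with $\lambda\,\mathcal{A}(\mathrm{SNR})\,\mathrm{SNR}<1$, be determined by $$\mathrm{SNR}=\mathbf{E}\left[\min\left\{\left[\frac1\lambda-\frac1{|h|^2}\right]^+,\ \mathcal{A}(\mathrm{SNR})\,\mathrm{SNR}\right\}\right].$$ Then (1) $\mathcal{A}(\mathrm{SNR})\,\mathrm{SNR}\to0$ as $\mathrm{SNR}\to0$; and (2) if moreover $\mathcal{A}(\mathrm{SNR})\to\infty$ as $\mathrm{SNR}\to0$, then $\lambda\to\infty$ as $\mathrm{SNR}\to0$.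
   Context: $[u]^+=\max\{0,u\}$. The water-filling allocation $[1/\lambda_0-1/|h|^2]^+$ is the optimal power allocation without a peak constraint; its peak power is $1/\lambda_0$, and $1/\lambda_0\to0$ as $\mathrm{SNR}\to0$. *)

theory Defs
  imports "HOL-Probability.Probability"
begin

text \<open>Expectation of a function of the channel power gain g = |h|^2, which is
  exponentially distributed with unit mean (Rayleigh fading).\<close>
definition gain_mean :: "(real \<Rightarrow> real) \<Rightarrow> real" where
  "gain_mean f = (\<integral>g. f g * exponential_density 1 g \<partial>lborel)"

definition pos_part :: "real \<Rightarrow> real" where
  "pos_part u = max 0 u"

end

theory Submission
  imports Defs
begin

text \<open>Everything rests on one tail estimate: a nonnegative bounded allocation that is at least
  \<open>a\<close> whenever the gain exceeds \<open>c\<close> has mean at least \<open>a exp (-c)\<close>. If the peak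
  \<open>1/\<lambda>\<^sub>0\<close> of the water-filling allocation stayed above some \<open>\<epsilon> > 0\<close>, the allocation would be
  at least \<open>\<epsilon>/2\<close> on gains above \<open>2/\<epsilon>\<close>, forcing \<open>SNR \<ge> \<epsilon>/2 exp (-2/\<epsilon>)\<close>; hence
  \<open>1/\<lambda>\<^sub>0 \<rightarrow> 0\<close>, and \<open>\<A> SNR\<close>, squeezed between \<open>0\<close> and \<open>1/\<lambda>\<^sub>0\<close>, tends to \<open>0\<close> too.
  Likewise, if \<open>1/\<lambda> \<ge> \<epsilon>\<close> while \<open>\<A> SNR \<le> \<epsilon>/2\<close>, the clipped allocation equals its peak
  \<open>\<A> SNR\<close> on gains above \<open>2/\<epsilon>\<close>, so \<open>SNR \<ge> \<A> SNR exp (-2/\<epsilon>)\<close>, i.e. \<open>\<A> \<le> exp (2/\<epsilon>)\<close>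
  stays bounded.\<close>

abbreviation gain_distribution :: "real measure" where
  "gain_distribution \<equiv> density lborel (exponential_density 1)"

lemma prob_space_gain_distribution: "prob_space gain_distribution"
  by (rule prob_space_exponential_density) simp

lemma measure_gain_distribution_greaterThan:
  assumes "0 \<le> c"
  shows "measure gain_distribution {c<..} = exp (- c)"
proof -
  interpret prob_space gain_distribution by (rule prob_space_gain_distribution)
  have "emeasure gain_distribution {..c} = ennreal (1 - exp (- c))"
    using emeasure_erlang_density[of 1 0 c] assms by (simp add: erlang_CDF_0)
  then have le: "measure gain_distribution {..c} = 1 - exp (- c)"
    using assms by (simp add: emeasure_eq_measure ennreal_inj)
  have "{c<..} = space gain_distribution - {..c}" by auto
  then have "measure gain_distribution {c<..} = 1 - measure gain_distribution {..c}"
    by (metis prob_compl sets_lborel sets_density atMost_borel)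
  with le show ?thesis by simp
qed

lemma AE_gain_distribution_nonneg: "AE g in gain_distribution. 0 \<le> g"
  by (subst AE_density) (auto simp: exponential_density_def)

lemma gain_mean_eq_integral:
  assumes "f \<in> borel_measurable borel"
  shows "gain_mean f = integral\<^sup>L gain_distribution f"
  unfolding gain_mean_def by (subst integral_density) (auto simp: mult.commute assms)

lemma gain_mean_ge_tail:
  fixes f :: "real \<Rightarrow> real"
  assumes f: "f \<in> borel_measurable borel"
    and bounded: "\<And>g. 0 \<le> g \<Longrightarrow> 0 \<le> f g \<and> f g \<le> K"
    and "0 \<le> c" and "0 \<le> a" and tail: "\<And>g. c < g \<Longrightarrow> a \<le> f g"
  shows "a * exp (- c) \<le> gain_mean f"
proof -
  interpret prob_space gain_distribution by (rule prob_space_gain_distribution)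
  have "AE g in gain_distribution. norm (f g) \<le> K"
    using AE_gain_distribution_nonneg by eventually_elim (use bounded in force)
  then have "integrable gain_distribution f"
    by (rule integrable_const_bound) (simp add: f)
  moreover have "AE g in gain_distribution. a * indicator {c<..} g \<le> f g"
    using AE_gain_distribution_nonneg
    by eventually_elim (use bounded tail in \<open>auto split: split_indicator\<close>)
  moreover have "AE g in gain_distribution. 0 \<le> f g"
    using AE_gain_distribution_nonneg by eventually_elim (use bounded in blast)
  ultimately have "integral\<^sup>L gain_distribution (\<lambda>g. a * indicator {c<..} g) \<le> gain_mean f"
    by (simp only: gain_mean_eq_integral[OF f] integral_mono_AE')
  then show ?thesis
    using measure_gain_distribution_greaterThan[OF \<open>0 \<le> c\<close>] by simp
qed

lemma inverse_less_half:
  fixes e g :: real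
  assumes "0 < e" and "2 / e < g"
  shows "1 / g < e / 2"
proof -
  have "0 < g" using assms by (smt (verit) divide_pos_pos)
  with assms show ?thesis by (simp add: field_simps)
qed

lemma gain_mean_waterfill_ge:
  assumes "0 < e" and "e \<le> m"
  shows "e / 2 * exp (- (2 / e)) \<le> gain_mean (\<lambda>g. pos_part (m - 1 / g))"
proof (rule gain_mean_ge_tail[where K = m])
  show "(\<lambda>g. pos_part (m - 1 / g)) \<in> borel_measurable borel"
    unfolding pos_part_def by measurable
  show "0 \<le> pos_part (m - 1 / g) \<and> pos_part (m - 1 / g) \<le> m" if "0 \<le> g" for g
    using that assms by (auto simp: pos_part_def)
  show "e / 2 \<le> pos_part (m - 1 / g)" if "2 / e < g" for g
    using inverse_less_half[OF \<open>0 < e\<close> that] assms by (simp add: pos_part_def)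
qed (use assms in auto)

lemma gain_mean_clipped_waterfill_ge:
  assumes "0 < e" and "e \<le> m" and "0 \<le> P" and "P \<le> e / 2"
  shows "P * exp (- (2 / e)) \<le> gain_mean (\<lambda>g. min (pos_part (m - 1 / g)) P)"
proof (rule gain_mean_ge_tail[where K = P])
  show "(\<lambda>g. min (pos_part (m - 1 / g)) P) \<in> borel_measurable borel"
    unfolding pos_part_def by measurable
  show "0 \<le> min (pos_part (m - 1 / g)) P \<and> min (pos_part (m - 1 / g)) P \<le> P" for g
    using assms by (auto simp: pos_part_def)
  show "P \<le> min (pos_part (m - 1 / g)) P" if "2 / e < g" for g
    using inverse_less_half[OF \<open>0 < e\<close> that] assms by (simp add: pos_part_def)
qed (use assms in auto)

lemma waterfill_peak_tendsto_0:
  assumes waterfill: "\<And>s. 0 < s \<Longrightarrow> 0 < lam0 s \<and> s = gain_mean (\<lambda>g. pos_part (1 / lam0 s - 1 / g))"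
  shows "((\<lambda>s. 1 / lam0 s) \<longlongrightarrow> 0) (at_right 0)"
proof (rule order_tendstoI)
  fix e :: real
  assume "e < 0"
  show "\<forall>\<^sub>F s in at_right 0. e < 1 / lam0 s"
    using eventually_at_right_less
    by eventually_elim (use waterfill \<open>e < 0\<close> in \<open>smt (verit) divide_pos_pos\<close>)
next
  fix e :: real
  assume "0 < e"
  show "\<forall>\<^sub>F s in at_right 0. 1 / lam0 s < e"
  proof (rule eventually_at_rightI[where b = "e / 2 * exp (- (2 / e))"])
    fix s
    assume s: "s \<in> {0<..<e / 2 * exp (- (2 / e))}"
    show "1 / lam0 s < e"
    proof (rule ccontr)
      assume "\<not> 1 / lam0 s < e"
      then have "e / 2 * exp (- (2 / e)) \<le> gain_mean (\<lambda>g. pos_part (1 / lam0 s - 1 / g))"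
        by (intro gain_mean_waterfill_ge \<open>0 < e\<close>) simp
      with s waterfill[of s] show False by simp
    qed
  qed (use \<open>0 < e\<close> in simp)
qed

lemma clipped_waterfill_level_tendsto_at_top:
  assumes peak: "((\<lambda>s. A s * s) \<longlongrightarrow> 0) (at_right 0)"
    and A: "filterlim A at_top (at_right 0)"
    and level: "\<forall>\<^sub>F s in at_right 0. 0 < lam s \<and>
          s = gain_mean (\<lambda>g. min (pos_part (1 / lam s - 1 / g)) (A s * s))"
  shows "filterlim lam at_top (at_right 0)"
  unfolding filterlim_at_top
proof
  fix Z :: real
  define e where "e = 1 / max Z 1"
  have "0 < e" by (simp add: e_def)
  have small_peak: "\<forall>\<^sub>F s in at_right 0. A s * s \<le> e / 2"
    using order_tendstoD(2)[OF peak, of "e / 2"] \<open>0 < e\<close> by (auto elim: eventually_mono)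
  have large_A: "\<forall>\<^sub>F s in at_right 0. exp (2 / e) < A s"
    using A by (simp add: filterlim_at_top_dense)
  show "\<forall>\<^sub>F s in at_right 0. Z \<le> lam s"
    using small_peak large_A level eventually_at_right_less
  proof eventually_elim
    case (elim s)
    show ?case
    proof (rule ccontr)
      assume "\<not> Z \<le> lam s"
      then have "e \<le> 1 / lam s"
        unfolding e_def using elim by (intro divide_left_mono) auto
      moreover have "0 \<le> A s * s"
        using elim by (smt (verit) exp_gt_zero mult_pos_pos)
      ultimately have "A s * s * exp (- (2 / e)) \<le> s"
        using gain_mean_clipped_waterfill_ge[OF \<open>0 < e\<close>] elim by metis
      then have "A s \<le> exp (2 / e)"
        using elim by (simp add: exp_minus field_simps)
      with elim show False by simp
    qed
  qed
qed

theorem lemma3: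
  fixes A lam0 lam :: "real \<Rightarrow> real"
  assumes PAPR: "\<And>s. s > 0 \<Longrightarrow> A s \<ge> 1"
    and waterfill: "\<And>s. s > 0 \<Longrightarrow>
          lam0 s > 0 \<and> s = gain_mean (\<lambda>g. pos_part (1 / lam0 s - 1 / g))"
    and effective: "\<forall>\<^sub>F s in at_right 0. A s * s < 1 / lam0 s"
    and lam_def: "\<forall>\<^sub>F s in at_right 0. lam s > 0 \<and> lam s * A s * s < 1 \<and>
          s = gain_mean (\<lambda>g. min (pos_part (1 / lam s - 1 / g)) (A s * s))"
  shows "((\<lambda>s. A s * s) \<longlongrightarrow> 0) (at_right 0)
    \<and> (filterlim A at_top (at_right 0) \<longrightarrow> filterlim lam at_top (at_right 0))"
proof -
  have "\<forall>\<^sub>F s in at_right 0. 0 \<le> A s * s"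
    using eventually_at_right_less by eventually_elim (use PAPR in \<open>smt (verit) mult_pos_pos\<close>)
  moreover have "\<forall>\<^sub>F s in at_right 0. A s * s \<le> 1 / lam0 s"
    using effective by eventually_elim simp
  ultimately have peak: "((\<lambda>s. A s * s) \<longlongrightarrow> 0) (at_right 0)"
    by (rule tendsto_sandwich[OF _ _ tendsto_const waterfill_peak_tendsto_0[OF waterfill]])
  have "\<forall>\<^sub>F s in at_right 0. 0 < lam s \<and>
          s = gain_mean (\<lambda>g. min (pos_part (1 / lam s - 1 / g)) (A s * s))"
    using lam_def by eventually_elim blast
  with peak show ?thesis
    using clipped_waterfill_level_tendsto_at_top by blast
qed

end
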